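(* Let $(X,d,\mu)$ be a locally Ahlfors $Q$-regular metric measure space, $p>Q$, $N\in\mathbb{N}$, $E\subseteq X$ compact, and $\nu$ a finite nonzero Borel measure supported on $E$. Let $0<\alpha'<N$ and let $g\in N^{1,p}(X;\mathbb{R}^N)$ satisfy $$\iint|g(x)-g(y)|^{-\alpha'}\,d\nu(y)\,d\nu(x)<\infty.$$ Let $Z$ be the set of real $N\times N$ matrices all of whose entries have absolute value at most $1$, equipped with Lebesgue measure (as a subset of $\mathbb{R}^{N^2}$). Then for every $f_0\in N^{1,p}(X;\mathbb{R}^N)$, the map $f_L=f_0+Lg$ satisfies $\dim f_L(E)\ge\alpha'$ for almost every $L\in Z$.
   Context: Locally Ahlfors $Q$-regular: for every compact $K\subseteq X$ there are $R>0$, $C\ge1$ with $r^Q/C\le\mu(B(x,r))\le Cr^Q$ for $x\in K$, $0<r<R$. $N^{1,p}(X;\mathbb{R}^N)$ is the Newtonian–Sobolev space of maps in $L^p(X;\mathbb{R}^N)$ having an upper gradient in $L^p(X)$ (a Borel $h\ge0$ is an upper gradient of $f$ if $|f(\gamma(0))-f(\gamma(1))|\le\int_\gamma h\,ds$ for every rectifiable curve $\gamma$); maps are evaluated pointwise via fixed representatives. $\dim$ is Hausdorff dimension. *)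

theory Defs
  imports "HOL-Analysis.Analysis"
begin

definition locally_ahlfors_regular :: "'a::metric_space measure \<Rightarrow> real \<Rightarrow> bool" where
  "locally_ahlfors_regular \<mu> Q \<longleftrightarrow>
     (\<forall>K. compact K \<longrightarrow>
        (\<exists>R>0. \<exists>C\<ge>1. \<forall>x\<in>K. \<forall>r. 0 < r \<and> r < R \<longrightarrow>
            ennreal (r powr Q / C) \<le> emeasure \<mu> (ball x r) \<and>
            emeasure \<mu> (ball x r) \<le> ennreal (C * r powr Q)))"

definition curve_length :: "(real \<Rightarrow> 'a::metric_space) \<Rightarrow> real \<Rightarrow> real \<Rightarrow> ennreal" where
  "curve_length \<gamma> a b =
     (SUP (n, t) \<in> {(n::nat, t::nat \<Rightarrow> real). t 0 = a \<and> t n = b \<and> (\<forall>i<n. t i \<le> t (Suc i))}.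
        (\<Sum>i<n. ennreal (dist (\<gamma> (t i)) (\<gamma> (t (Suc i))))))"

definition rectifiable_curve :: "(real \<Rightarrow> 'a::metric_space) \<Rightarrow> bool" where
  "rectifiable_curve \<gamma> \<longleftrightarrow> continuous_on {0..1} \<gamma> \<and> curve_length \<gamma> 0 1 < \<infinity>"

definition length_fun :: "(real \<Rightarrow> 'a::metric_space) \<Rightarrow> real \<Rightarrow> real" where
  "length_fun \<gamma> t = enn2real (curve_length \<gamma> 0 (max 0 (min t 1)))"

text \<open>Line integral of a nonnegative function along a rectifiable curve w.r.t. arc length,
  realised as the Lebesgue--Stieltjes integral with respect to the length function.\<close>
definition line_integral :: "('a::metric_space \<Rightarrow> ennreal) \<Rightarrow> (real \<Rightarrow> 'a) \<Rightarrow> ennreal" where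
  "line_integral h \<gamma> = (\<integral>\<^sup>+ t. h (\<gamma> t) \<partial>interval_measure (length_fun \<gamma>))"

definition upper_gradient ::
    "('a::metric_space \<Rightarrow> 'b::real_normed_vector) \<Rightarrow> ('a \<Rightarrow> ennreal) \<Rightarrow> bool" where
  "upper_gradient f h \<longleftrightarrow> h \<in> borel_measurable borel \<and>
     (\<forall>\<gamma>. rectifiable_curve \<gamma> \<longrightarrow>
        ennreal (norm (f (\<gamma> 0) - f (\<gamma> 1))) \<le> line_integral h \<gamma>)"

definition ennpow :: "ennreal \<Rightarrow> real \<Rightarrow> ennreal" where
  "ennpow x p = (if x = \<infinity> then \<infinity> else ennreal (enn2real x powr p))"

definition newtonian :: "'a::metric_space measure \<Rightarrow> real \<Rightarrow> ('a \<Rightarrow> 'b::euclidean_space) set" where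
  "newtonian \<mu> p = {f. f \<in> borel_measurable \<mu> \<and>
       (\<integral>\<^sup>+ x. ennreal (norm (f x) powr p) \<partial>\<mu>) < \<infinity> \<and>
       (\<exists>h. upper_gradient f h \<and> (\<integral>\<^sup>+ x. ennpow (h x) p \<partial>\<mu>) < \<infinity>)}"

definition haus_cost :: "real \<Rightarrow> 'a::metric_space set \<Rightarrow> ennreal" where
  "haus_cost s U = (if U = {} then 0 else if \<not> bounded U then \<infinity>
                    else if s = 0 then 1 else ennreal (diameter U powr s))"

definition hausdorff_content :: "real \<Rightarrow> real \<Rightarrow> 'a::metric_space set \<Rightarrow> ennreal" where
  "hausdorff_content s \<delta> A =
     (INF C \<in> {C :: nat \<Rightarrow> 'a set. A \<subseteq> (\<Union>i. C i) \<and> (\<forall>i. bounded (C i) \<and> diameter (C i) \<le> \<delta>)}.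
        (\<Sum>i. haus_cost s (C i)))"

definition hausdorff_measure :: "real \<Rightarrow> 'a::metric_space set \<Rightarrow> ennreal" where
  "hausdorff_measure s A = (SUP \<delta> \<in> {0<..}. hausdorff_content s \<delta> A)"

definition hausdorff_dim :: "'a::metric_space set \<Rightarrow> ereal" where
  "hausdorff_dim A = Inf (ereal ` {s. 0 \<le> s \<and> hausdorff_measure s A = 0})"

end

theory Submission
  imports Defs
begin

(*
  Fix x, y with g x ~= g y and let k be a coordinate where g x - g y is largest. Translating the
  k-th column of L by w moves f_L x - f_L y by (g x - g y)_k w, so averaging the Riesz kernel over
  that column bounds the integral of |f_L x - f_L y|^(-a) over the cube Z by a constant times
  |g x - g y|^(-a); this is where a < N enters, through the local integrability of |t|^(-a/N)
  on the line. By Tonelli the a-energy of nu under f_L is then finite for almost every L in Z,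
  and the mass distribution principle turns finite energy into dim f_L(E) >= a.
  The Sobolev and Ahlfors hypotheses are only needed to know that f_0 and g are Borel.
*)

definition riesz_kernel :: "real \<Rightarrow> 'b::real_normed_vector \<Rightarrow> ennreal" where
  "riesz_kernel \<alpha> u = (if u = 0 then \<infinity> else ennreal (norm u powr (- \<alpha>)))"

definition riesz_energy :: "'a measure \<Rightarrow> real \<Rightarrow> ('a \<Rightarrow> 'b::real_normed_vector) \<Rightarrow> ennreal" where
  "riesz_energy \<nu> \<alpha> F = (\<integral>\<^sup>+x. (\<integral>\<^sup>+y. riesz_kernel \<alpha> (F x - F y) \<partial>\<nu>) \<partial>\<nu>)"

lemma borel_measurable_riesz_kernel[measurable]:
  "riesz_kernel \<alpha> \<in> borel_measurable (borel :: 'b::euclidean_space measure)"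
  unfolding riesz_kernel_def by measurable

lemma powr_le_riesz_kernel:
  assumes "norm u \<le> d" "0 < d" "0 \<le> \<alpha>"
  shows "ennreal (d powr (- \<alpha>)) \<le> riesz_kernel \<alpha> u"
  using assms by (auto simp: riesz_kernel_def intro!: ennreal_leI powr_mono2')

lemma emeasure_preimage_cball_le:
  fixes F :: "'a \<Rightarrow> 'b::euclidean_space"
  assumes [measurable]: "F \<in> borel_measurable \<nu>" and "0 < \<alpha>" "0 \<le> d"
    and potential: "(\<integral>\<^sup>+y. riesz_kernel \<alpha> (F x - F y) \<partial>\<nu>) \<le> ennreal M"
  shows "emeasure \<nu> {y\<in>space \<nu>. dist (F y) (F x) \<le> d} \<le> ennreal M * ennreal (d powr \<alpha>)"
proof (cases "d = 0")
  case True
  let ?P = "\<lambda>y. riesz_kernel \<alpha> (F x - F y)"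
  have "{y\<in>space \<nu>. dist (F y) (F x) \<le> d} \<subseteq> ?P -` {\<infinity>} \<inter> space \<nu>"
    using True by (auto simp: riesz_kernel_def)
  moreover have "emeasure \<nu> (?P -` {\<infinity>} \<inter> space \<nu>) = 0"
    using potential by (intro nn_integral_PInf) (auto simp: top_unique)
  moreover have "?P -` {\<infinity>} \<inter> space \<nu> \<in> sets \<nu>"
    by measurable
  ultimately have "emeasure \<nu> {y\<in>space \<nu>. dist (F y) (F x) \<le> d} = 0"
    by (metis (no_types, lifting) emeasure_mono le_zero_eq)
  then show ?thesis by simp
next
  case False
  let ?S = "{y\<in>space \<nu>. dist (F y) (F x) \<le> d}"
  have "ennreal (d powr (- \<alpha>)) * emeasure \<nu> ?S = (\<integral>\<^sup>+y. ennreal (d powr (- \<alpha>)) * indicator ?S y \<partial>\<nu>)"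
    by (rule nn_integral_cmult_indicator[symmetric]) measurable
  also have "\<dots> \<le> (\<integral>\<^sup>+y. riesz_kernel \<alpha> (F x - F y) \<partial>\<nu>)"
    using False assms by (intro nn_integral_mono)
      (auto simp: indicator_def dist_norm norm_minus_commute intro!: powr_le_riesz_kernel)
  finally have "ennreal (d powr (- \<alpha>)) * emeasure \<nu> ?S \<le> ennreal M"
    using potential by simp
  then have "ennreal (d powr \<alpha>) * (ennreal (d powr (- \<alpha>)) * emeasure \<nu> ?S) \<le> ennreal (d powr \<alpha>) * ennreal M"
    by (rule mult_left_mono) simp
  then show ?thesis
    using False \<open>0 \<le> d\<close>
    by (simp add: mult.assoc[symmetric] ennreal_mult'[symmetric] powr_add[symmetric] mult.commute)
qed

lemma diameter_powr_le_haus_cost: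
  assumes "C \<noteq> {}" "bounded C" "diameter C \<le> 1" "0 \<le> s" "s \<le> \<alpha>" "0 < \<alpha>"
  shows "ennreal (diameter C powr \<alpha>) \<le> haus_cost s C"
proof -
  have "0 \<le> diameter C" by (simp add: diameter_ge_0 assms(2))
  then have "diameter C powr \<alpha> \<le> (if s = 0 then 1 else diameter C powr s)"
    using assms by (auto intro: powr_le1 powr_mono')
  then show ?thesis
    using assms by (simp add: haus_cost_def split: if_splits)
qed

lemma emeasure_le_mult_haus_cost_sum:
  fixes F :: "'a \<Rightarrow> 'b::euclidean_space"
  assumes [measurable]: "F \<in> borel_measurable \<nu>" "G \<in> sets \<nu>"
    and "0 < \<alpha>" "0 \<le> s" "s \<le> \<alpha>"
    and potential: "\<And>x. x \<in> G \<Longrightarrow> (\<integral>\<^sup>+y. riesz_kernel \<alpha> (F x - F y) \<partial>\<nu>) \<le> ennreal M"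
    and cover: "F ` G \<subseteq> (\<Union>i. C i)" "\<And>i. bounded (C i)" "\<And>i. diameter (C i) \<le> 1"
  shows "emeasure \<nu> G \<le> ennreal M * (\<Sum>i. haus_cost s (C i))"
proof -
  define S where "S i = {y\<in>space \<nu>. F y \<in> closure (C i)} \<inter> G" for i
  have S_sets[measurable]: "S i \<in> sets \<nu>" for i
  proof -
    have "F -` closure (C i) \<inter> space \<nu> \<in> sets \<nu>"
      by (rule measurable_sets[OF assms(1)]) simp
    moreover have "S i = (F -` closure (C i) \<inter> space \<nu>) \<inter> G"
      unfolding S_def by blast
    ultimately show ?thesis
      using assms(2) by (metis sets.Int)
  qed
  have S_le: "emeasure \<nu> (S i) \<le> ennreal M * haus_cost s (C i)" for i
  proof (cases "S i = {}")
    case False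
    then obtain x where x: "x \<in> S i" by blast
    have "S i \<subseteq> {y\<in>space \<nu>. dist (F y) (F x) \<le> diameter (C i)}"
      using x cover(2) diameter_bounded_bound[of "closure (C i)"]
      by (auto simp: S_def diameter_closure)
    then have "emeasure \<nu> (S i) \<le> ennreal M * ennreal (diameter (C i) powr \<alpha>)"
      using x assms(3) cover(2) potential[of x]
      by (intro order_trans[OF emeasure_mono emeasure_preimage_cball_le])
        (auto simp: S_def diameter_ge_0)
    also have "\<dots> \<le> ennreal M * haus_cost s (C i)"
      using x cover assms(3-5) closure_empty
      by (intro mult_left_mono diameter_powr_le_haus_cost) (auto simp: S_def)
    finally show ?thesis .
  qed simp
  have "G \<subseteq> (\<Union>i. S i)"
  proof
    fix x assume "x \<in> G"
    then obtain i where "F x \<in> C i" using cover(1) by blast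
    then show "x \<in> (\<Union>i. S i)"
      using \<open>x \<in> G\<close> closure_subset sets.sets_into_space[OF assms(2)] by (auto simp: S_def)
  qed
  then have "emeasure \<nu> G \<le> emeasure \<nu> (\<Union>i. S i)"
    by (intro emeasure_mono) auto
  also have "\<dots> \<le> (\<Sum>i. emeasure \<nu> (S i))"
    by (intro emeasure_subadditive_countably) auto
  also have "\<dots> \<le> (\<Sum>i. ennreal M * haus_cost s (C i))"
    by (intro suminf_le S_le) auto
  finally show ?thesis by simp
qed

lemma emeasure_divide_le_hausdorff_content_image:
  fixes F :: "'a \<Rightarrow> 'b::euclidean_space"
  assumes "F \<in> borel_measurable \<nu>" "G \<in> sets \<nu>" "G \<subseteq> E"
    and "0 < \<alpha>" "0 \<le> s" "s \<le> \<alpha>" "0 < M"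
    and "\<And>x. x \<in> G \<Longrightarrow> (\<integral>\<^sup>+y. riesz_kernel \<alpha> (F x - F y) \<partial>\<nu>) \<le> ennreal M"
  shows "emeasure \<nu> G / ennreal M \<le> hausdorff_content s 1 (F ` E)"
  unfolding hausdorff_content_def
proof (rule INF_greatest, clarify)
  fix C :: "nat \<Rightarrow> 'b set"
  assume "F ` E \<subseteq> (\<Union>i. C i)" "\<forall>i. bounded (C i) \<and> diameter (C i) \<le> 1"
  moreover have "F ` G \<subseteq> (\<Union>i. C i)"
    using \<open>G \<subseteq> E\<close> \<open>F ` E \<subseteq> (\<Union>i. C i)\<close> by blast
  ultimately have "emeasure \<nu> G \<le> ennreal M * (\<Sum>i. haus_cost s (C i))"
    using assms by (intro emeasure_le_mult_haus_cost_sum) auto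
  then show "emeasure \<nu> G / ennreal M \<le> (\<Sum>i. haus_cost s (C i))"
    using \<open>0 < M\<close> by (intro divide_le_posI_ennreal) auto
qed

lemma ereal_le_hausdorff_dim:
  assumes "\<And>s. 0 \<le> s \<Longrightarrow> s < \<alpha> \<Longrightarrow> hausdorff_measure s A \<noteq> 0"
  shows "ereal \<alpha> \<le> hausdorff_dim A"
  unfolding hausdorff_dim_def
proof (rule Inf_greatest)
  fix t assume "t \<in> ereal ` {s. 0 \<le> s \<and> hausdorff_measure s A = 0}"
  then obtain s where "t = ereal s" "0 \<le> s" "hausdorff_measure s A = 0"
    by blast
  moreover from this have "\<not> s < \<alpha>"
    using assms by blast
  ultimately show "ereal \<alpha> \<le> t"
    by simp
qed

lemma hausdorff_content_le_hausdorff_measure: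
  "hausdorff_content s 1 A \<le> hausdorff_measure s A"
  unfolding hausdorff_measure_def by (rule SUP_upper) auto

lemma exists_sublevel_set_positive_emeasure:
  fixes f :: "'a \<Rightarrow> ennreal"
  assumes [measurable]: "f \<in> borel_measurable M" "A \<in> sets M"
    and "(\<integral>\<^sup>+x. f x \<partial>M) < \<infinity>" "AE x in M. x \<in> A" "emeasure M (space M) \<noteq> 0"
  obtains n :: nat where "emeasure M ({x\<in>space M. f x \<le> of_nat n} \<inter> A) \<noteq> 0"
proof (rule ccontr)
  assume "\<not> thesis"
  then have "emeasure M ({x\<in>space M. f x \<le> of_nat n} \<inter> A) = 0" for n
    using that by blast
  then have "{x\<in>space M. f x \<le> of_nat n} \<inter> A \<in> null_sets M" for n
    by (intro null_setsI) auto
  then have "AE x in M. \<forall>n::nat. x \<notin> {x\<in>space M. f x \<le> of_nat n} \<inter> A"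
    unfolding AE_all_countable by (intro allI AE_not_in)
  moreover have "AE x in M. f x \<noteq> \<infinity>"
    using assms(3) by (intro nn_integral_PInf_AE) auto
  ultimately have "AE x in M. False"
    using assms(4) AE_space
  proof eventually_elim
    case (elim x)
    then obtain n :: nat where "f x < of_nat n"
      using ennreal_Ex_less_of_nat[of "f x"] by (auto simp: less_top)
    then show False
      using elim(1) elim(3,4) by (auto dest: less_imp_le)
  qed
  then show False
    using assms(5) ae_filter_eq_bot_iff eventually_False by blast
qed

lemma hausdorff_dim_image_ge_of_finite_energy:
  fixes \<nu> :: "'a::topological_space measure" and F :: "'a \<Rightarrow> 'b::euclidean_space"
  assumes "sigma_finite_measure \<nu>" and sets_\<nu>: "sets \<nu> = sets borel"
    and "emeasure \<nu> (space \<nu>) \<noteq> 0" and "E \<in> sets borel" "emeasure \<nu> (UNIV - E) = 0"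
    and "F \<in> borel_measurable borel" "0 < \<alpha>"
    and energy: "riesz_energy \<nu> \<alpha> F < \<infinity>"
  shows "ereal \<alpha> \<le> hausdorff_dim (F ` E)"
proof -
  interpret sigma_finite_measure \<nu> by fact
  have [measurable]: "F \<in> borel_measurable \<nu>" and E_sets: "E \<in> sets \<nu>"
    using assms(4,6) measurable_cong_sets[OF sets_\<nu> refl] sets_\<nu> by auto
  define P where "P x = (\<integral>\<^sup>+y. riesz_kernel \<alpha> (F x - F y) \<partial>\<nu>)" for x
  have P_measurable[measurable]: "P \<in> borel_measurable \<nu>"
    unfolding P_def by measurable
  have "(\<integral>\<^sup>+x. P x \<partial>\<nu>) < \<infinity>"
    using energy by (simp add: P_def riesz_energy_def)
  moreover have "UNIV - E \<in> null_sets \<nu>"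
    using assms(5) sets_\<nu> \<open>E \<in> sets borel\<close> by (auto intro: null_setsI)
  then have "AE x in \<nu>. x \<in> E"
    by (auto dest: AE_not_in)
  ultimately obtain n :: nat where "emeasure \<nu> ({x\<in>space \<nu>. P x \<le> of_nat n} \<inter> E) \<noteq> 0"
    using exists_sublevel_set_positive_emeasure[OF P_measurable E_sets _ _ assms(3)] by blast
  moreover define G where "G = {x\<in>space \<nu>. P x \<le> of_nat n} \<inter> E"
  ultimately have "emeasure \<nu> G \<noteq> 0"
    by simp
  have "G \<in> sets \<nu>"
    unfolding G_def using E_sets by measurable
  define M where "M = real n + 1"
  have "P x \<le> ennreal M" if "x \<in> G" for x
    using that by (auto simp: G_def M_def ennreal_of_nat_eq_real_of_nat intro: order_trans)
  then have "emeasure \<nu> G / ennreal M \<le> hausdorff_content s 1 (F ` E)"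
    if "0 \<le> s" "s \<le> \<alpha>" for s
    using that assms(7) \<open>G \<in> sets \<nu>\<close> by (intro emeasure_divide_le_hausdorff_content_image) (auto simp: G_def M_def P_def)
  moreover have "emeasure \<nu> G / ennreal M \<noteq> 0"
    using \<open>emeasure \<nu> G \<noteq> 0\<close> by simp
  ultimately show ?thesis
    by (intro ereal_le_hausdorff_dim)
      (metis order_less_imp_le order_trans le_zero_eq hausdorff_content_le_hausdorff_measure)
qed

lemma nn_integral_riesz_kernel_Icc_0:
  assumes "0 < \<beta>" "\<beta> < 1" "0 \<le> r"
  shows "(\<integral>\<^sup>+u. riesz_kernel \<beta> (u::real) * indicator {0..r} u \<partial>lborel) = ennreal (r powr (1-\<beta>) / (1-\<beta>))"
proof -
  have "AE u in lborel. riesz_kernel \<beta> (u::real) * indicator {0..r} u = ennreal (u powr (-\<beta>)) * indicator {0..r} u"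
    using AE_lborel_singleton[of "0::real"]
    by eventually_elim (auto simp: riesz_kernel_def indicator_def)
  then have "(\<integral>\<^sup>+u. riesz_kernel \<beta> (u::real) * indicator {0..r} u \<partial>lborel) =
      (\<integral>\<^sup>+u. ennreal (u powr (-\<beta>)) * indicator {0..r} u \<partial>lborel)"
    by (rule nn_integral_cong_AE)
  also have "\<dots> = ennreal (r powr (-\<beta>+1) / (-\<beta>+1))"
    using has_integral_powr_from_0[of "-\<beta>" r] assms
    by (intro nn_integral_has_integral_lebesgue') auto
  finally show ?thesis by simp
qed

lemma nn_integral_riesz_kernel_symmetric_Icc:
  assumes "0 < \<beta>" "\<beta> < 1" "0 \<le> r"
  shows "(\<integral>\<^sup>+u. riesz_kernel \<beta> (u::real) * indicator {-r..r} u \<partial>lborel) \<le> 2 * ennreal (r powr (1-\<beta>) / (1-\<beta>))"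
proof -
  let ?f = "\<lambda>u::real. riesz_kernel \<beta> u * indicator {0..r} u"
  have reflect: "(\<integral>\<^sup>+u. ?f (- u) \<partial>lborel) = (\<integral>\<^sup>+u. ?f u \<partial>lborel)"
    using nn_integral_real_affine[of ?f "-1" 0] by simp
  have "(\<integral>\<^sup>+u. riesz_kernel \<beta> u * indicator {-r..r} u \<partial>lborel) \<le> (\<integral>\<^sup>+u. ?f u + ?f (- u) \<partial>lborel)"
    by (intro nn_integral_mono) (auto simp: indicator_def riesz_kernel_def)
  also have "\<dots> = (\<integral>\<^sup>+u. ?f u \<partial>lborel) + (\<integral>\<^sup>+u. ?f (- u) \<partial>lborel)"
    by (rule nn_integral_add) auto
  finally show ?thesis
    unfolding reflect nn_integral_riesz_kernel_Icc_0[OF assms] by (simp add: mult_2)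
qed

lemma nn_integral_riesz_kernel_affine_le:
  assumes \<beta>: "0 < \<beta>" "\<beta> < 1" and "s \<noteq> 0"
  shows "(\<integral>\<^sup>+t. indicator {-1..1} t * riesz_kernel \<beta> (c + s * t::real) \<partial>lborel)
          \<le> ennreal (2 / (1-\<beta>) + 2) * ennreal (\<bar>s\<bar> powr (-\<beta>))"
proof -
  define r where "r = \<bar>s\<bar>"
  have r: "0 < r" using \<open>s \<noteq> 0\<close> by (simp add: r_def)
  define f where "f u = indicator {c-r..c+r} u * riesz_kernel \<beta> (u::real)" for u
  have [measurable]: "f \<in> borel_measurable borel"
    unfolding f_def by measurable
  have "c + s * t \<in> {c-r..c+r} \<longleftrightarrow> \<bar>s * t\<bar> \<le> r" for t
    by (auto simp: abs_le_iff)
  also have "\<bar>s * t\<bar> \<le> r \<longleftrightarrow> t \<in> {-1..1}" for t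
    using \<open>s \<noteq> 0\<close> by (auto simp: r_def abs_mult abs_le_iff)
  finally have "(\<lambda>t. f (c + s * t)) = (\<lambda>t. indicator {-1..1} t * riesz_kernel \<beta> (c + s * t))"
    by (simp add: f_def indicator_def)
  then have "(\<integral>\<^sup>+u. f u \<partial>lborel) = ennreal r * (\<integral>\<^sup>+t. indicator {-1..1} t * riesz_kernel \<beta> (c + s * t) \<partial>lborel)"
    using nn_integral_real_affine[of f s c] \<open>s \<noteq> 0\<close> by (simp add: r_def)
  moreover have "(\<integral>\<^sup>+u. f u \<partial>lborel) \<le> ennreal r * (ennreal (2 / (1-\<beta>) + 2) * ennreal (r powr (-\<beta>)))"
  proof -
    \<comment> \<open>Near the singularity use the exact integral, elsewhere the bound \<open>r powr - \<beta>\<close>.\<close>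
    have "(\<integral>\<^sup>+u. f u \<partial>lborel)
        \<le> (\<integral>\<^sup>+u. riesz_kernel \<beta> u * indicator {-r..r} u + ennreal (r powr (-\<beta>)) * indicator {c-r..c+r} u \<partial>lborel)"
    proof (intro nn_integral_mono)
      fix u :: real
      show "f u \<le> riesz_kernel \<beta> u * indicator {-r..r} u + ennreal (r powr (-\<beta>)) * indicator {c-r..c+r} u"
      proof (cases "u \<in> {-r..r}")
        case False
        then have "\<bar>u\<bar> powr (-\<beta>) \<le> r powr (-\<beta>)"
          using r \<beta> by (intro powr_mono2') auto
        then show ?thesis
          using False r by (auto simp: f_def indicator_def riesz_kernel_def)
      qed (auto simp: f_def indicator_def)
    qed
    also have "\<dots> = (\<integral>\<^sup>+u. riesz_kernel \<beta> u * indicator {-r..r} u \<partial>lborel) + ennreal (r powr (-\<beta>)) * ennreal (2 * r)"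
      using r by (subst nn_integral_add) (auto simp: nn_integral_cmult_indicator)
    also have "\<dots> \<le> 2 * ennreal (r powr (1-\<beta>) / (1-\<beta>)) + ennreal (r powr (-\<beta>)) * ennreal (2 * r)"
      using nn_integral_riesz_kernel_symmetric_Icc[OF \<beta>, of r] r by (intro add_right_mono) auto
    also have "\<dots> = ennreal (r * ((2 / (1-\<beta>) + 2) * r powr (-\<beta>)))"
    proof -
      have "r powr (1-\<beta>) = r * r powr (-\<beta>)"
        using r by (simp add: powr_diff powr_minus divide_inverse)
      then have "2 * (r powr (1-\<beta>) / (1-\<beta>)) + r powr (-\<beta>) * (2 * r) = r * ((2 / (1-\<beta>) + 2) * r powr (-\<beta>))"
        using \<beta> by (simp add: field_simps)
      moreover have "2 * ennreal (r powr (1-\<beta>) / (1-\<beta>)) = ennreal (2 * (r powr (1-\<beta>) / (1-\<beta>)))"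
        using \<beta> by (intro numeral_mult_ennreal) simp
      moreover have "ennreal (r powr (-\<beta>)) * ennreal (2 * r) = ennreal (r powr (-\<beta>) * (2 * r))"
        using r by (intro ennreal_mult'[symmetric]) simp
      moreover have "ennreal (2 * (r powr (1-\<beta>) / (1-\<beta>))) + ennreal (r powr (-\<beta>) * (2 * r))
          = ennreal (2 * (r powr (1-\<beta>) / (1-\<beta>)) + r powr (-\<beta>) * (2 * r))"
        using r \<beta> by (intro ennreal_plus[symmetric]) auto
      ultimately show ?thesis
        by simp
    qed
    finally show ?thesis
      using r \<beta> by (simp add: ennreal_mult)
  qed
  ultimately show ?thesis
    using r by (simp add: r_def ennreal_mult_le_mult_iff)
qed

lemma powr_minus_divide_power:
  assumes "0 < x" "0 < n"
  shows "(x powr (- (a / real n))) ^ n = x powr (- a)"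
  using assms by (simp add: powr_realpow[symmetric] powr_powr)

lemma riesz_kernel_le_prod_coordinates:
  fixes u :: "'e::euclidean_space"
  assumes "0 < \<alpha>"
  shows "riesz_kernel \<alpha> u \<le> (\<Prod>j\<in>Basis. riesz_kernel (\<alpha> / DIM('e)) (u \<bullet> j))"
proof (cases "u = 0")
  case False
  let ?\<beta> = "\<alpha> / DIM('e)"
  have "riesz_kernel \<alpha> u = (\<Prod>j\<in>(Basis::'e set). ennreal (norm u powr (- ?\<beta>)))"
    using False powr_minus_divide_power[of "norm u" "DIM('e)" \<alpha>]
    by (simp add: riesz_kernel_def prod_constant ennreal_power)
  also have "\<dots> \<le> (\<Prod>j\<in>Basis. riesz_kernel ?\<beta> (u \<bullet> j))"
  proof (rule prod_mono_ennreal)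
    fix j :: 'e assume "j \<in> Basis"
    then have "norm (u \<bullet> j) \<le> norm u"
      by (simp add: Basis_le_norm)
    then show "ennreal (norm u powr (- ?\<beta>)) \<le> riesz_kernel ?\<beta> (u \<bullet> j)"
      using False assms by (intro powr_le_riesz_kernel) auto
  qed
  finally show ?thesis .
qed (simp add: riesz_kernel_def)

lemma nn_integral_riesz_kernel_cube_le:
  fixes b :: "'e::euclidean_space" and \<alpha> s :: real
  assumes \<alpha>: "0 < \<alpha>" "\<alpha> < DIM('e)" and "s \<noteq> 0"
  shows "(\<integral>\<^sup>+w. indicator (cbox (-One) One) w * riesz_kernel \<alpha> (b + s *\<^sub>R w) \<partial>lborel)
     \<le> ennreal ((2 / (1 - \<alpha> / DIM('e)) + 2) ^ DIM('e)) * ennreal (\<bar>s\<bar> powr (- \<alpha>))"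
proof -
  define \<beta> where "\<beta> = \<alpha> / DIM('e)"
  have \<beta>: "0 < \<beta>" "\<beta> < 1"
    using \<alpha> by (auto simp: \<beta>_def divide_less_eq)
  define C where "C = 2 / (1 - \<beta>) + 2"
  have "0 \<le> C"
    using \<beta> by (simp add: C_def)
  have "(\<integral>\<^sup>+w. indicator (cbox (-One) One) w * riesz_kernel \<alpha> (b + s *\<^sub>R w) \<partial>lborel)
     \<le> (\<integral>\<^sup>+w. (\<Prod>j\<in>Basis. indicator {-1..1} (w \<bullet> j) * riesz_kernel \<beta> (b \<bullet> j + s * (w \<bullet> j))) \<partial>lborel)"
  proof (intro nn_integral_mono)
    fix w :: 'e
    show "indicator (cbox (-One) One) w * riesz_kernel \<alpha> (b + s *\<^sub>R w)
       \<le> (\<Prod>j\<in>Basis. indicator {-1..1} (w \<bullet> j) * riesz_kernel \<beta> (b \<bullet> j + s * (w \<bullet> j)))"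
    proof (cases "w \<in> cbox (-One) One")
      case True
      have "riesz_kernel \<alpha> (b + s *\<^sub>R w) \<le> (\<Prod>j\<in>Basis. riesz_kernel \<beta> ((b + s *\<^sub>R w) \<bullet> j))"
        unfolding \<beta>_def by (rule riesz_kernel_le_prod_coordinates[OF \<alpha>(1)])
      also have "\<dots> = (\<Prod>j\<in>Basis. indicator {-1..1} (w \<bullet> j) * riesz_kernel \<beta> (b \<bullet> j + s * (w \<bullet> j)))"
        using True by (intro prod.cong) (auto simp: inner_add_left mem_box)
      finally show ?thesis
        using True by simp
    qed simp
  qed
  also have "\<dots> = (\<Prod>j\<in>Basis. (\<integral>\<^sup>+t. indicator {-1..1} t * riesz_kernel \<beta> (b \<bullet> j + s * t) \<partial>lborel))"
    by (rule nn_integral_lborel_prod) auto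
  also have "\<dots> \<le> (\<Prod>j\<in>(Basis::'e set). ennreal C * ennreal (\<bar>s\<bar> powr (-\<beta>)))"
    unfolding C_def by (intro prod_mono_ennreal nn_integral_riesz_kernel_affine_le \<beta> \<open>s \<noteq> 0\<close>)
  also have "\<dots> = ennreal (C ^ DIM('e)) * ennreal (\<bar>s\<bar> powr (- \<alpha>))"
    using \<open>0 \<le> C\<close> \<open>s \<noteq> 0\<close> powr_minus_divide_power[of "\<bar>s\<bar>" "DIM('e)" \<alpha>]
    by (simp add: prod_constant power_mult_distrib ennreal_power \<beta>_def)
  finally show ?thesis
    by (simp add: C_def \<beta>_def)
qed

definition matrix_cube :: "real \<Rightarrow> (real^'n^'m) set" where
  "matrix_cube c = {L. \<forall>i j. \<bar>L $ i $ j\<bar> \<le> c}"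

lemma closed_matrix_cube: "closed (matrix_cube c)"
  unfolding matrix_cube_def
  by (intro closed_Collect_all closed_Collect_le continuous_intros)

lemma bounded_matrix_cube: "bounded (matrix_cube c)"
proof -
  have "norm L \<le> CARD('m) * (CARD('n) * c)" if "L \<in> matrix_cube c" for L :: "real^'n^'m"
  proof -
    have "norm L \<le> (\<Sum>i\<in>UNIV. norm (L $ i))"
      unfolding norm_vec_def by (rule L2_set_le_sum) simp
    also have "\<dots> \<le> (\<Sum>i\<in>UNIV. \<Sum>j\<in>UNIV. \<bar>L $ i $ j\<bar>)"
      by (intro sum_mono norm_le_l1_cart)
    also have "\<dots> \<le> (\<Sum>i\<in>(UNIV::'m set). \<Sum>j\<in>(UNIV::'n set). c)"
      using that by (intro sum_mono) (simp add: matrix_cube_def)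
    finally show ?thesis
      by simp
  qed
  then show ?thesis
    unfolding bounded_iff by blast
qed

lemma sets_matrix_cube[measurable]: "matrix_cube c \<in> sets borel"
  by (simp add: closed_matrix_cube)

lemma emeasure_matrix_cube_finite: "emeasure lborel (matrix_cube c) < \<infinity>"
  by (intro emeasure_bounded_finite bounded_matrix_cube)

lemma mem_cbox_One_iff: "w \<in> cbox (- One) (One :: real^'n) \<longleftrightarrow> (\<forall>i. \<bar>w $ i\<bar> \<le> 1)"
  by (auto simp: Cart_1[symmetric] mem_box_cart abs_le_iff)

definition column_matrix :: "'n \<Rightarrow> real^'m \<Rightarrow> real^'n^'m" where
  "column_matrix k w = (\<chi> i j. (if j = k then 1 else 0) * w $ i)"

lemma column_matrix_mult_vector: "column_matrix k w *v v = v $ k *\<^sub>R w"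
proof -
  have "(\<Sum>j\<in>UNIV. (if j = k then 1 else 0) * w $ i * v $ j) = v $ k * w $ i" for i
    by (simp add: if_distrib[where f = "\<lambda>x. x * _"] sum.delta cong: if_cong)
  then show ?thesis
    by (simp add: vec_eq_iff matrix_vector_mult_def column_matrix_def)
qed

lemma borel_measurable_column_matrix[measurable]: "column_matrix k \<in> borel_measurable borel"
  unfolding column_matrix_def by (intro borel_measurable_continuous_onI continuous_intros)

lemma matrix_cube_diff:
  "A \<in> matrix_cube a \<Longrightarrow> B \<in> matrix_cube b \<Longrightarrow> A - B \<in> matrix_cube (a + b)"
  unfolding matrix_cube_def using abs_triangle_ineq4 by (fastforce intro: order_trans add_mono)

lemma column_matrix_in_matrix_cube:
  "w \<in> cbox (-One) One \<Longrightarrow> column_matrix k w \<in> matrix_cube 1"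
  by (simp add: matrix_cube_def column_matrix_def mem_cbox_One_iff)

lemma borel_measurable_matrix_vector_mult[measurable (raw)]:
  fixes f :: "'a \<Rightarrow> real^'n^'m" and g :: "'a \<Rightarrow> real^'n"
  assumes "f \<in> borel_measurable M" "g \<in> borel_measurable M"
  shows "(\<lambda>x. f x *v g x) \<in> borel_measurable M"
proof -
  have "(\<lambda>p::(real^'n^'m) \<times> (real^'n). fst p *v snd p) \<in> borel_measurable borel"
    unfolding matrix_vector_mult_def by (intro borel_measurable_continuous_onI continuous_intros)
  then have "(\<lambda>p::(real^'n^'m) \<times> (real^'n). fst p *v snd p) \<in> borel_measurable (borel \<Otimes>\<^sub>M borel)"
    by (simp add: borel_prod)
  from measurable_compose[OF measurable_Pair[OF assms] this] show ?thesis
    by simp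
qed

lemma nn_integral_lborel_mult_emeasure_eq_translates:
  fixes h :: "'a::euclidean_space \<Rightarrow> ennreal" and T :: "'b::euclidean_space \<Rightarrow> 'a"
  assumes [measurable]: "h \<in> borel_measurable borel" "T \<in> borel_measurable borel" "Q \<in> sets borel"
  shows "(\<integral>\<^sup>+L. h L \<partial>lborel) * emeasure lborel Q
       = (\<integral>\<^sup>+L. (\<integral>\<^sup>+w. indicator Q w * h (T w + L) \<partial>lborel) \<partial>lborel)"
proof -
  have translate: "(\<integral>\<^sup>+L. h L \<partial>lborel) = (\<integral>\<^sup>+L. h (T w + L) \<partial>lborel)" for w
    by (subst lborel_distr_plus[symmetric, of "T w"]) (simp add: nn_integral_distr)
  have "(\<integral>\<^sup>+L. h L \<partial>lborel) * emeasure lborel Q = (\<integral>\<^sup>+w. (\<integral>\<^sup>+L. h L \<partial>lborel) * indicator Q w \<partial>lborel)"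
    by (rule nn_integral_cmult_indicator[symmetric]) simp
  also have "\<dots> = (\<integral>\<^sup>+w. (\<integral>\<^sup>+L. indicator Q w * h (T w + L) \<partial>lborel) \<partial>lborel)"
    by (intro nn_integral_cong) (simp add: translate[symmetric] nn_integral_cmult mult.commute)
  also have "\<dots> = (\<integral>\<^sup>+L. (\<integral>\<^sup>+w. indicator Q w * h (T w + L) \<partial>lborel) \<partial>lborel)"
    by (rule lborel_pair.Fubini') measurable
  finally show ?thesis .
qed

lemma nn_integral_matrix_cube_riesz_kernel_le_coordinate:
  fixes a v :: "real^'n" and \<alpha> :: real
  assumes \<alpha>: "0 < \<alpha>" "\<alpha> < CARD('n)" and "v $ k \<noteq> 0"
  defines "C \<equiv> ennreal ((2 / (1 - \<alpha> / CARD('n)) + 2) ^ CARD('n)) * ennreal (\<bar>v $ k\<bar> powr - \<alpha>)"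
  shows "(\<integral>\<^sup>+L. indicator (matrix_cube 1) L * riesz_kernel \<alpha> (a + L *v v) \<partial>lborel)
           * emeasure lborel (cbox (- One) (One :: real^'n))
         \<le> C * emeasure lborel (matrix_cube 2 :: (real^'n^'n) set)"
proof -
  let ?Q = "cbox (- One) (One :: real^'n)"
  define h where "h L = indicator (matrix_cube 1) L * riesz_kernel \<alpha> (a + L *v v)" for L :: "real^'n^'n"
  have [measurable]: "h \<in> borel_measurable borel"
    unfolding h_def by measurable
  have column_average: "(\<integral>\<^sup>+w. indicator ?Q w * h (column_matrix k w + L) \<partial>lborel) \<le> indicator (matrix_cube 2) L * C"
    for L :: "real^'n^'n"
  proof -
    have "indicator ?Q w * h (column_matrix k w + L)
        \<le> indicator (matrix_cube 2) L * (indicator ?Q w * riesz_kernel \<alpha> ((a + L *v v) + v $ k *\<^sub>R w))" for w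
    proof (cases "w \<in> ?Q \<and> column_matrix k w + L \<in> matrix_cube 1")
      case True
      then have "(column_matrix k w + L) - column_matrix k w \<in> matrix_cube (1 + 1)"
        by (intro matrix_cube_diff column_matrix_in_matrix_cube) auto
      then show ?thesis
        using True by (simp add: h_def matrix_vector_mult_add_rdistrib column_matrix_mult_vector ac_simps)
    qed (auto simp: h_def)
    then have "(\<integral>\<^sup>+w. indicator ?Q w * h (column_matrix k w + L) \<partial>lborel)
        \<le> indicator (matrix_cube 2) L * (\<integral>\<^sup>+w. indicator ?Q w * riesz_kernel \<alpha> ((a + L *v v) + v $ k *\<^sub>R w) \<partial>lborel)"
      by (subst nn_integral_cmult[symmetric]) (auto intro: nn_integral_mono)
    also have "\<dots> \<le> indicator (matrix_cube 2) L * C"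
      using nn_integral_riesz_kernel_cube_le[of \<alpha> "v $ k" "a + L *v v"] \<alpha> \<open>v $ k \<noteq> 0\<close>
      by (intro mult_left_mono) (auto simp: C_def)
    finally show ?thesis .
  qed
  have "(\<integral>\<^sup>+L. h L \<partial>lborel) * emeasure lborel ?Q
      = (\<integral>\<^sup>+L. (\<integral>\<^sup>+w. indicator ?Q w * h (column_matrix k w + L) \<partial>lborel) \<partial>lborel)"
    by (rule nn_integral_lborel_mult_emeasure_eq_translates) auto
  also have "\<dots> \<le> (\<integral>\<^sup>+L. C * indicator (matrix_cube 2) (L :: real^'n^'n) \<partial>lborel)"
    by (intro nn_integral_mono) (use column_average in \<open>simp add: mult.commute\<close>)
  also have "\<dots> = C * emeasure lborel (matrix_cube 2 :: (real^'n^'n) set)"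
    by (rule nn_integral_cmult_indicator) simp
  finally show ?thesis
    by (simp add: h_def)
qed

lemma exists_coordinate_norm_le:
  fixes v :: "real^'n"
  obtains k where "norm v \<le> CARD('n) * \<bar>v $ k\<bar>"
proof -
  obtain k where k: "\<And>j. \<bar>v $ j\<bar> \<le> \<bar>v $ k\<bar>"
    using Max_in[of "range (\<lambda>j. \<bar>v $ j\<bar>)"] Max_ge[of "range (\<lambda>j. \<bar>v $ j\<bar>)"] by fastforce
  have "norm v \<le> (\<Sum>j\<in>UNIV. \<bar>v $ j\<bar>)"
    by (rule norm_le_l1_cart)
  also have "\<dots> \<le> (\<Sum>j\<in>(UNIV::'n set). \<bar>v $ k\<bar>)"
    by (intro sum_mono k)
  finally show ?thesis
    using that by simp
qed

lemma powr_coordinate_le_riesz_kernel: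
  fixes v :: "real^'n"
  assumes "norm v \<le> CARD('n) * \<bar>v $ k\<bar>" "v \<noteq> 0" "0 \<le> \<alpha>"
  shows "ennreal (\<bar>v $ k\<bar> powr - \<alpha>) \<le> ennreal (real CARD('n) powr \<alpha>) * riesz_kernel \<alpha> v"
proof -
  have "norm v / CARD('n) \<le> \<bar>v $ k\<bar>"
    using assms(1) by (simp add: divide_le_eq mult.commute)
  then have "\<bar>v $ k\<bar> powr - \<alpha> \<le> (norm v / CARD('n)) powr - \<alpha>"
    using assms(2,3) by (intro powr_mono2') auto
  also have "\<dots> = norm v powr - \<alpha> / real CARD('n) powr - \<alpha>"
    by (rule powr_divide)
  also have "\<dots> = real CARD('n) powr \<alpha> * norm v powr - \<alpha>"
    by (simp add: powr_minus divide_inverse mult.commute)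
  finally show ?thesis
    using assms(2) by (simp add: riesz_kernel_def ennreal_mult'[symmetric] ennreal_leI)
qed

lemma exists_nn_integral_matrix_cube_riesz_kernel_le:
  fixes \<alpha> :: real
  assumes \<alpha>: "0 < \<alpha>" "\<alpha> < CARD('n)"
  obtains K where "K < \<infinity>"
    "\<And>a v :: real^'n. (\<integral>\<^sup>+(L::real^'n^'n). indicator (matrix_cube 1) L * riesz_kernel \<alpha> (a + L *v v) \<partial>lborel) \<le> K * riesz_kernel \<alpha> v"
proof -
  define C where "C = ennreal ((2 / (1 - \<alpha> / CARD('n)) + 2) ^ CARD('n)) * ennreal (real CARD('n) powr \<alpha>)
      * emeasure lborel (matrix_cube 2 :: (real^'n^'n) set)"
  define q :: real where "q = 2 ^ CARD('n)"
  have "(One - (- One)) \<bullet> b = (2::real)" if "b \<in> (Basis :: (real^'n) set)" for b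
  proof -
    have "One \<bullet> b = (1::real)"
      using that by simp
    then show ?thesis
      by (simp only: inner_diff_left inner_minus_left)
  qed
  then have cube_volume: "emeasure lborel (cbox (- One) (One :: real^'n)) = ennreal q"
    by (subst emeasure_lborel_cbox) (auto simp: q_def)
  have "emeasure lborel (matrix_cube 2 :: (real^'n^'n) set) < \<infinity>"
    by (rule emeasure_matrix_cube_finite)
  \<comment> \<open>The summand 1 keeps K nonzero, as the case \<open>v = 0\<close> (kernel value \<open>\<infinity>\<close>) requires.\<close>
  then have "C * ennreal (1 / q) + 1 < \<infinity>"
    by (simp add: C_def ennreal_mult_less_top)
  moreover have "(\<integral>\<^sup>+L. indicator (matrix_cube 1) L * riesz_kernel \<alpha> (a + L *v v) \<partial>lborel)
      \<le> (C * ennreal (1 / q) + 1) * riesz_kernel \<alpha> v" for a :: "real^'n" and v :: "real^'n"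
  proof (cases "v = 0")
    case False
    let ?I = "(\<integral>\<^sup>+L. indicator (matrix_cube 1) L * riesz_kernel \<alpha> (a + L *v v) \<partial>lborel)"
    obtain k where k: "norm v \<le> CARD('n) * \<bar>v $ k\<bar>"
      using exists_coordinate_norm_le by blast
    with False have "v $ k \<noteq> 0"
      by auto
    have "?I * ennreal q \<le> ennreal ((2 / (1 - \<alpha> / CARD('n)) + 2) ^ CARD('n)) * ennreal (\<bar>v $ k\<bar> powr - \<alpha>)
        * emeasure lborel (matrix_cube 2 :: (real^'n^'n) set)"
      using nn_integral_matrix_cube_riesz_kernel_le_coordinate[OF \<alpha> \<open>v $ k \<noteq> 0\<close>, of a] cube_volume
      by simp
    also have "\<dots> \<le> ennreal ((2 / (1 - \<alpha> / CARD('n)) + 2) ^ CARD('n))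
        * (ennreal (real CARD('n) powr \<alpha>) * riesz_kernel \<alpha> v) * emeasure lborel (matrix_cube 2 :: (real^'n^'n) set)"
      using powr_coordinate_le_riesz_kernel[OF k False] \<alpha> by (intro mult_left_mono mult_right_mono) auto
    also have "\<dots> = C * riesz_kernel \<alpha> v"
      by (simp add: C_def ac_simps)
    finally have "?I * ennreal q \<le> C * riesz_kernel \<alpha> v" .
    have "?I = ?I * ennreal q * ennreal (1 / q)"
      by (simp add: q_def mult.assoc ennreal_mult'[symmetric])
    also have "\<dots> \<le> C * riesz_kernel \<alpha> v * ennreal (1 / q)"
      using \<open>?I * ennreal q \<le> C * riesz_kernel \<alpha> v\<close> by (rule mult_right_mono) simp
    also have "\<dots> = C * ennreal (1 / q) * riesz_kernel \<alpha> v"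
      by (simp add: ac_simps)
    also have "\<dots> \<le> (C * ennreal (1 / q) + 1) * riesz_kernel \<alpha> v"
      by (intro mult_right_mono) simp_all
    finally show ?thesis .
  qed (simp add: riesz_kernel_def ennreal_mult_top)
  ultimately show thesis
    by (rule that)
qed

lemma nn_integral_matrix_cube_riesz_energy_le:
  fixes F0 G :: "'a \<Rightarrow> real^'n"
  assumes "sigma_finite_measure \<nu>" and [measurable]: "F0 \<in> borel_measurable \<nu>" "G \<in> borel_measurable \<nu>"
    and K: "\<And>a v :: real^'n. (\<integral>\<^sup>+(L::real^'n^'n). indicator (matrix_cube 1) L * riesz_kernel \<alpha> (a + L *v v) \<partial>lborel)
              \<le> K * riesz_kernel \<alpha> v"
  shows "(\<integral>\<^sup>+(L::real^'n^'n). indicator (matrix_cube 1) L * riesz_energy \<nu> \<alpha> (\<lambda>x. F0 x + L *v G x) \<partial>lborel)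
           \<le> K * riesz_energy \<nu> \<alpha> G"
proof -
  interpret \<nu>: sigma_finite_measure \<nu> by fact
  have lborel_\<nu>: "pair_sigma_finite lborel \<nu>"
    by (simp add: pair_sigma_finite_def sigma_finite_lborel \<nu>.sigma_finite_measure_axioms)
  let ?k = "\<lambda>L x y. indicator (matrix_cube 1) L * riesz_kernel \<alpha> ((F0 x + L *v G x) - (F0 y + L *v G y))"
  have "(\<integral>\<^sup>+L. indicator (matrix_cube 1) L * riesz_energy \<nu> \<alpha> (\<lambda>x. F0 x + L *v G x) \<partial>lborel)
      = (\<integral>\<^sup>+L. (\<integral>\<^sup>+x. (\<integral>\<^sup>+y. ?k L x y \<partial>\<nu>) \<partial>\<nu>) \<partial>lborel)"
    unfolding riesz_energy_def by (simp add: nn_integral_cmult[symmetric])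
  also have "\<dots> = (\<integral>\<^sup>+x. (\<integral>\<^sup>+L. (\<integral>\<^sup>+y. ?k L x y \<partial>\<nu>) \<partial>lborel) \<partial>\<nu>)"
    by (rule pair_sigma_finite.Fubini'[OF lborel_\<nu>, symmetric]) measurable
  also have "\<dots> = (\<integral>\<^sup>+x. (\<integral>\<^sup>+y. (\<integral>\<^sup>+L. ?k L x y \<partial>lborel) \<partial>\<nu>) \<partial>\<nu>)"
    by (intro nn_integral_cong pair_sigma_finite.Fubini'[OF lborel_\<nu>, symmetric]) measurable
  also have "\<dots> \<le> (\<integral>\<^sup>+x. (\<integral>\<^sup>+y. K * riesz_kernel \<alpha> (G x - G y) \<partial>\<nu>) \<partial>\<nu>)"
  proof (intro nn_integral_mono)
    fix x y
    have "(F0 x + L *v G x) - (F0 y + L *v G y) = (F0 x - F0 y) + L *v (G x - G y)" for L :: "real^'n^'n"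
      by (simp add: matrix_vector_mult_diff_distrib algebra_simps)
    then show "(\<integral>\<^sup>+L. ?k L x y \<partial>lborel) \<le> K * riesz_kernel \<alpha> (G x - G y)"
      by (simp only:) (rule K)
  qed
  also have "\<dots> = K * riesz_energy \<nu> \<alpha> G"
    unfolding riesz_energy_def by (simp add: nn_integral_cmult)
  finally show ?thesis .
qed

lemma AE_matrix_cube_riesz_energy_finite:
  fixes F0 G :: "'a \<Rightarrow> real^'n" and \<alpha> :: real
  assumes "sigma_finite_measure \<nu>" "F0 \<in> borel_measurable \<nu>" "G \<in> borel_measurable \<nu>"
    and "0 < \<alpha>" "\<alpha> < CARD('n)" "riesz_energy \<nu> \<alpha> G < \<infinity>"
  shows "AE L in (lborel :: (real^'n^'n) measure).
           L \<in> matrix_cube 1 \<longrightarrow> riesz_energy \<nu> \<alpha> (\<lambda>x. F0 x + L *v G x) < \<infinity>"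
proof -
  interpret \<nu>: sigma_finite_measure \<nu> by fact
  obtain K where "K < \<infinity>" and K: "\<And>a v :: real^'n. (\<integral>\<^sup>+(L::real^'n^'n). indicator (matrix_cube 1) L
      * riesz_kernel \<alpha> (a + L *v v) \<partial>lborel) \<le> K * riesz_kernel \<alpha> v"
    using exists_nn_integral_matrix_cube_riesz_kernel_le assms(4,5) by blast
  have "(\<integral>\<^sup>+(L::real^'n^'n). indicator (matrix_cube 1) L * riesz_energy \<nu> \<alpha> (\<lambda>x. F0 x + L *v G x) \<partial>lborel)
      \<le> K * riesz_energy \<nu> \<alpha> G"
    by (rule nn_integral_matrix_cube_riesz_energy_le[OF assms(1-3) K])
  also have "\<dots> < \<infinity>"
    using \<open>K < \<infinity>\<close> assms(6) by (simp add: ennreal_mult_less_top)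
  finally have "AE L in lborel. indicator (matrix_cube 1) L * riesz_energy \<nu> \<alpha> (\<lambda>x. F0 x + L *v G x) \<noteq> \<infinity>"
    using assms(2,3) by (intro nn_integral_PInf_AE) (auto simp: riesz_energy_def)
  then show ?thesis
    by eventually_elim (auto simp: less_top)
qed

theorem lemma4p4:
  fixes \<mu> :: "'a::metric_space measure" and \<nu> :: "'a measure"
    and Q p \<alpha>' :: real and E :: "'a set"
    and g :: "'a \<Rightarrow> real ^ 'n"
  assumes "sets \<mu> = sets borel"
    and "locally_ahlfors_regular \<mu> Q"
    and "p > Q"
    and "compact E"
    and "sets \<nu> = sets borel" and "finite_measure \<nu>" and "emeasure \<nu> (space \<nu>) \<noteq> 0"
    and "emeasure \<nu> (UNIV - E) = 0"
    and "0 < \<alpha>'" and "\<alpha>' < real CARD('n)"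
    and "g \<in> newtonian \<mu> p"
    and "(\<integral>\<^sup>+ x. (\<integral>\<^sup>+ y. (if g x = g y then \<infinity>
                            else ennreal (norm (g x - g y) powr (- \<alpha>'))) \<partial>\<nu>) \<partial>\<nu>) < \<infinity>"
  shows "\<forall>f0 \<in> newtonian \<mu> p.
           AE L in (lborel :: (real ^ 'n ^ 'n) measure).
             (\<forall>i j. \<bar>L $ i $ j\<bar> \<le> 1) \<longrightarrow>
               hausdorff_dim ((\<lambda>x. f0 x + L *v g x) ` E) \<ge> ereal \<alpha>'"
proof
  fix f0 :: "'a \<Rightarrow> real^'n"
  assume "f0 \<in> newtonian \<mu> p"
  interpret \<nu>: finite_measure \<nu> by fact
  have borel: "f0 \<in> borel_measurable borel" "g \<in> borel_measurable borel"
    using \<open>f0 \<in> newtonian \<mu> p\<close> \<open>g \<in> newtonian \<mu> p\<close> measurable_cong_sets[OF \<open>sets \<mu> = sets borel\<close> refl]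
    by (auto simp: newtonian_def)
  have "riesz_energy \<nu> \<alpha>' g < \<infinity>"
    using assms(12) by (simp add: riesz_energy_def riesz_kernel_def)
  moreover have "f0 \<in> borel_measurable \<nu>" "g \<in> borel_measurable \<nu>"
    using borel measurable_cong_sets[OF \<open>sets \<nu> = sets borel\<close> refl] by auto
  ultimately have "AE L in lborel. L \<in> matrix_cube 1 \<longrightarrow> riesz_energy \<nu> \<alpha>' (\<lambda>x. f0 x + L *v g x) < \<infinity>"
    using AE_matrix_cube_riesz_energy_finite \<nu>.sigma_finite_measure_axioms \<open>0 < \<alpha>'\<close> \<open>\<alpha>' < CARD('n)\<close>
    by blast
  then show "AE L in lborel. (\<forall>i j. \<bar>L $ i $ j\<bar> \<le> 1) \<longrightarrow>
      hausdorff_dim ((\<lambda>x. f0 x + L *v g x) ` E) \<ge> ereal \<alpha>'"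
  proof (rule eventually_mono, intro impI)
    fix L :: "real^'n^'n"
    assume "L \<in> matrix_cube 1 \<longrightarrow> riesz_energy \<nu> \<alpha>' (\<lambda>x. f0 x + L *v g x) < \<infinity>"
      and "\<forall>i j. \<bar>L $ i $ j\<bar> \<le> 1"
    then show "hausdorff_dim ((\<lambda>x. f0 x + L *v g x) ` E) \<ge> ereal \<alpha>'"
      using assms borel \<nu>.sigma_finite_measure_axioms
      by (intro hausdorff_dim_image_ge_of_finite_energy) (auto simp: matrix_cube_def compact_imp_closed)
  qed
qed

end
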